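(* Let $\beta_1,\beta_2,\beta_3$ be pairwise distinct with $|\beta_3-\beta_1|<|\beta_3-\beta_2|$ and $|\beta_3-\beta_1|<|\beta_2-\beta_1|$. Assume $\alpha_3-\alpha_1\in\mathbb{Z}_{\le-4}$ and $\alpha_2-\alpha_1,\alpha_3-\alpha_2\notin\mathbb{Z}_{\le-2}$, and set $N=\alpha_1-\alpha_3$, $b_n=(-1)^n\frac{(2+\alpha_3-\alpha_2)^{(n)}}{(\beta_3-\beta_2)^n}$, $c_n=(-1)^n\frac{(2+\alpha_2-\alpha_1)^{(n)}}{(\beta_2-\beta_1)^n}$, and $\hat\omega(x)=\big(\sum_{n\ge0}c_nx^n\big)\big(\sum_{n\ge0}b_nx^n\big)$. Then for every direction $\theta\notin\{\arg(\beta_1-\beta_2),\arg(\beta_1-\beta_3),\arg(\beta_2-\beta_3)\}$ the 1-sum $\omega_\theta$ of $\hat\omega$ in direction $\theta$ satisfies $$(\beta_3-\beta_1)\omega_\theta(x)=\sum_{l=0}^{N-4}\big[(\beta_2-\beta_1)b_l+(\beta_3-\beta_2)c_l\big]x^l\Big(\sum_{s=0}^{N-4-l}(-1)^s\frac{(4+l+\alpha_3-\alpha_1)^{(s)}}{(\beta_3-\beta_1)^s}x^s\Big)$$ $$+x^{N-3}\Big[b_{N-3}(\beta_2-\beta_1)\int_0^{+\infty e^{i\theta}}\Big(1+\frac{\xi}{\beta_3-\beta_2}\Big)^{1+\alpha_2-\alpha_1}\Big(1+\frac{\xi}{\beta_3-\beta_1}\Big)^{-1}e^{-\xi/x}d\Big(\frac{\xi}{x}\Big)$$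 $$+c_{N-3}(\beta_3-\beta_2)\int_0^{+\infty e^{i\theta}}\Big(1+\frac{\xi}{\beta_2-\beta_1}\Big)^{1+\alpha_3-\alpha_2}\Big(1+\frac{\xi}{\beta_3-\beta_1}\Big)^{-1}e^{-\xi/x}d\Big(\frac{\xi}{x}\Big)\Big].$$
   Context: $(a)^{(n)}=a(a+1)\cdots(a+n-1)$, $(a)^{(0)}=1$; complex powers use the principal branch. The 1-sum in direction $\theta$ of a Gevrey-1 series $\sum f_nx^n$ is $\int_0^{+\infty e^{i\theta}}h(\zeta)e^{-\zeta/x}d(\zeta/x)$, where $h$ is the analytic continuation (of at most exponential growth near the ray) of the Borel transform $\sum f_n\zeta^n/n!$. *)

theory Defs
  imports "HOL-Analysis.Analysis"
begin

definition ray_laplace :: "real \<Rightarrow> (complex \<Rightarrow> complex) \<Rightarrow> complex \<Rightarrow> complex" where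
  "ray_laplace \<theta> g x =
     integral {0..} (\<lambda>t::real. g (of_real t * cis \<theta>) * exp (- (of_real t * cis \<theta>) / x) * (cis \<theta> / x))"

text \<open>h is an analytic continuation, to an open neighbourhood of the closed ray of direction
  theta, of the Borel transform (sum of f n zeta^n / n!) of the formal series with coefficients f,
  with at most exponential growth (rate K) along the ray.\<close>
definition borel_continuation ::
  "(nat \<Rightarrow> complex) \<Rightarrow> real \<Rightarrow> (complex \<Rightarrow> complex) \<Rightarrow> real \<Rightarrow> bool" where
  "borel_continuation f \<theta> h K \<longleftrightarrow>
     (\<exists>S r C. open S \<and> 0 < r \<and> ball 0 r \<subseteq> S \<and> (\<forall>t\<ge>0. of_real t * cis \<theta> \<in> S) \<and>
        h holomorphic_on S \<and>
        (\<forall>\<zeta>\<in>ball 0 r. (\<lambda>n. f n / fact n * \<zeta> ^ n) sums h \<zeta>) \<and>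
        (\<forall>t\<ge>0. norm (h (of_real t * cis \<theta>)) \<le> C * exp (K * t)))"

end

theory Submission
  imports Defs "HOL-Complex_Analysis.Complex_Analysis" "HOL-Real_Asymp.Real_Asymp"
begin

text \<open>Write \<open>p = \<beta>2 - \<beta>1\<close>, \<open>q = \<beta>3 - \<beta>2\<close>, \<open>A = 2 + \<alpha>2 - \<alpha>1\<close>, \<open>B = 2 + \<alpha>3 - \<alpha>2\<close>. The Cauchy-product
  coefficients \<open>\<omega>\<close> satisfy a first-order recurrence, which says that the Borel transform \<open>h\<close>
  solves \<open>(p + q + \<zeta>) h' + (A + B) h = q c\<^sub>1 (1 + \<zeta>/p)\<^bsup>-A-1\<^esup> + p b\<^sub>1 (1 + \<zeta>/q)\<^bsup>-B-1\<^esup>\<close>: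
  near 0 by comparing power series, and on a slit neighbourhood of the ray by analytic continuation.
  Differentiating \<open>M = N - 3\<close> times kills the term in the \<open>(M-1)\<close>-st derivative, because
  \<open>A + B + M - 1 = 0\<close>, so the \<open>M\<close>-th derivative of \<open>h\<close> is explicit. Integrating the Laplace
  integral by parts \<open>M\<close> times produces the Taylor polynomial of \<open>h\<close> of degree \<open>M - 1\<close> plus \<open>x\<^sup>M\<close>
  times the Laplace transform of that explicit derivative, and the polynomial part is rewritten by
  solving the recurrence.\<close>

section \<open>Points off a ray\<close>

lemma Arg_on_ray:
  assumes "0 < t"
  obtains k :: int where "\<theta> = Arg (of_real t * cis \<theta>) + 2 * pi * of_int k"
proof -
  obtain k :: int where "Im (\<i> * of_real \<theta>) - of_int k * (2 * pi) = Arg (exp (\<i> * of_real \<theta>))"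
    using Arg_exp_diff_2pi by blast
  then have "\<theta> = Arg (cis \<theta>) + 2 * pi * of_int k"
    by (simp add: cis_conv_exp algebra_simps)
  with assms that show ?thesis by simp
qed

lemma not_on_ray_if_Arg_neq:
  assumes u: "u \<noteq> 0" and Arg: "\<And>k::int. \<theta> \<noteq> Arg u + 2 * pi * of_int k" and t: "t \<ge> 0"
  shows "of_real t * cis \<theta> \<noteq> u"
proof
  assume on_ray: "of_real t * cis \<theta> = u"
  with u t have "0 < t" by (cases "t = 0") auto
  then obtain k :: int where "\<theta> = Arg (of_real t * cis \<theta>) + 2 * pi * of_int k"
    by (rule Arg_on_ray)
  with on_ray Arg show False by blast
qed

lemma ray_distance_pos:
  assumes off: "\<And>t. t \<ge> 0 \<Longrightarrow> of_real t * cis \<theta> \<noteq> u"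
  obtains \<delta> where "\<delta> > 0" "\<And>t. t \<ge> 0 \<Longrightarrow> \<delta> \<le> norm (of_real t * cis \<theta> - u)"
proof -
  define v where "v = u * cis (- \<theta>)"
  have dist_eq: "norm (of_real t * cis \<theta> - u) = norm (of_real t - v)" for t
  proof -
    have "of_real t * cis \<theta> - u = cis \<theta> * (of_real t - v)"
      by (simp add: v_def algebra_simps cis_mult)
    then show ?thesis by (simp add: norm_mult)
  qed
  show ?thesis
  proof (cases "Im v = 0")
    case False
    show ?thesis
    proof (rule that)
      show "0 < \<bar>Im v\<bar>" using False by simp
      show "\<bar>Im v\<bar> \<le> norm (of_real t * cis \<theta> - u)" for t
        using abs_Im_le_cmod[of "of_real t - v"] by (simp add: dist_eq)
    qed
  next
    case True
    have "u = of_real (Re v) * cis \<theta>"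
    proof -
      have "v = of_real (Re v)" using True by (simp add: complex_eq_iff)
      moreover have "u = v * cis \<theta>" by (simp add: v_def cis_mult)
      ultimately show ?thesis by simp
    qed
    with off[of "Re v"] have neg: "Re v < 0" by (meson not_le)
    show ?thesis
    proof (rule that)
      show "0 < - Re v" using neg by simp
      show "- Re v \<le> norm (of_real t * cis \<theta> - u)" if "t \<ge> 0" for t
        using that complex_Re_le_cmod[of "of_real t - v"] by (simp add: dist_eq)
    qed
  qed
qed

lemma ray_shift_notin_nonpos_Reals:
  assumes u: "u \<noteq> 0" and off: "\<And>t. t \<ge> 0 \<Longrightarrow> of_real t * cis \<theta> \<noteq> - u" and t: "t \<ge> 0"
  shows "1 + of_real t * cis \<theta> / u \<notin> \<real>\<^sub>\<le>\<^sub>0"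
proof
  assume "1 + of_real t * cis \<theta> / u \<in> \<real>\<^sub>\<le>\<^sub>0"
  then obtain y where y: "y \<le> 0" "1 + of_real t * cis \<theta> / u = of_real y"
    by (auto simp: complex_nonpos_Reals_iff complex_eq_iff intro: exI[of _ "Re (1 + of_real t * cis \<theta> / u)"])
  then have "of_real (t / (1 - y)) * cis \<theta> = - u"
    using u by (simp add: field_simps)
  moreover have "t / (1 - y) \<ge> 0" using t y by simp
  ultimately show False using off by blast
qed

lemma slit_domain_around_ray:
  fixes S :: "complex set" and p q :: complex
  assumes S: "open S" and ray: "\<And>t. t \<ge> 0 \<Longrightarrow> of_real t * cis \<theta> \<in> S"
    and p: "p \<noteq> 0" "\<And>t. t \<ge> 0 \<Longrightarrow> of_real t * cis \<theta> \<noteq> - p"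
    and q: "q \<noteq> 0" "\<And>t. t \<ge> 0 \<Longrightarrow> of_real t * cis \<theta> \<noteq> - q"
  obtains D where "open D" "connected D" "D \<subseteq> S" "\<And>t. t \<ge> 0 \<Longrightarrow> of_real t * cis \<theta> \<in> D"
    "\<And>z. z \<in> D \<Longrightarrow> 1 + z / p \<notin> \<real>\<^sub>\<le>\<^sub>0" "\<And>z. z \<in> D \<Longrightarrow> 1 + z / q \<notin> \<real>\<^sub>\<le>\<^sub>0"
proof -
  define Z where "Z = ((\<lambda>z. 1 + z / p) -` \<real>\<^sub>\<le>\<^sub>0) \<union> ((\<lambda>z. 1 + z / q) -` \<real>\<^sub>\<le>\<^sub>0)"
  have "closed Z" unfolding Z_def
    by (intro closed_Un continuous_closed_vimage closed_nonpos_Reals_complex)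
       (use p q in \<open>auto intro!: continuous_intros\<close>)
  then have open_complement: "open (S - Z)" by (intro open_Diff S)
  define R where "R = (\<lambda>t::real. of_real t * cis \<theta>) ` {0..}"
  have "R \<subseteq> S - Z"
    using ray ray_shift_notin_nonpos_Reals[OF p] ray_shift_notin_nonpos_Reals[OF q]
    by (auto simp: R_def Z_def)
  moreover have "connected R" unfolding R_def
    by (intro connected_continuous_image continuous_intros) (auto simp: is_interval_connected_1 is_interval_ci)
  moreover have R0: "0 \<in> R" unfolding R_def by (auto intro!: image_eqI[of _ _ 0])
  ultimately have RD: "R \<subseteq> connected_component_set (S - Z) 0"
    by (intro connected_component_maximal)
  show ?thesis
  proof (rule that[of "connected_component_set (S - Z) 0"])
    show "open (connected_component_set (S - Z) 0)" by (rule open_connected_component[OF open_complement])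
    show "of_real t * cis \<theta> \<in> connected_component_set (S - Z) 0" if "t \<ge> 0" for t
      using RD that by (auto simp: R_def)
  qed (use connected_component_subset[of "S - Z" 0] in \<open>auto simp: Z_def\<close>)
qed

section \<open>Functions of exponential type below a rate\<close>

definition exp_type_less :: "(real \<Rightarrow> 'a::real_normed_vector) \<Rightarrow> real \<Rightarrow> bool" where
  "exp_type_less f c \<longleftrightarrow> (\<exists>C a. a < c \<and> (\<forall>t\<ge>0. norm (f t) \<le> C * exp (a * t)))"

lemma exp_type_lessE:
  assumes "exp_type_less f c"
  obtains C a where "0 \<le> C" "a < c" "\<And>t. t \<ge> 0 \<Longrightarrow> norm (f t) \<le> C * exp (a * t)"
proof -
  obtain C a where a: "a < c" and bound: "\<And>t. t \<ge> 0 \<Longrightarrow> norm (f t) \<le> C * exp (a * t)"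
    using assms unfolding exp_type_less_def by blast
  have "norm (f 0) \<le> C" using bound[of 0] by simp
  then have "0 \<le> C" by (rule order_trans[OF norm_ge_zero])
  with a bound that show ?thesis by blast
qed

lemma exp_type_less_cong:
  "exp_type_less f c \<Longrightarrow> (\<And>t. t \<ge> 0 \<Longrightarrow> f t = g t) \<Longrightarrow> exp_type_less g c"
  unfolding exp_type_less_def by metis

lemma exp_type_less_cmult:
  fixes f :: "real \<Rightarrow> 'a::real_normed_div_algebra"
  assumes "exp_type_less f c"
  shows "exp_type_less (\<lambda>t. k * f t) c"
proof -
  obtain C a where C: "0 \<le> C" "a < c" and bound: "\<And>t. t \<ge> 0 \<Longrightarrow> norm (f t) \<le> C * exp (a * t)"
    using exp_type_lessE[OF assms] by blast
  have "norm (k * f t) \<le> norm k * C * exp (a * t)" if "t \<ge> 0" for t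
    unfolding norm_mult mult.assoc by (intro mult_left_mono bound that) auto
  with C show ?thesis unfolding exp_type_less_def by blast
qed

lemma exp_type_less_add:
  assumes "exp_type_less f c" "exp_type_less g c"
  shows "exp_type_less (\<lambda>t. f t + g t) c"
proof -
  obtain C1 a1 where 1: "0 \<le> C1" "a1 < c" "\<And>t. t \<ge> 0 \<Longrightarrow> norm (f t) \<le> C1 * exp (a1 * t)"
    using exp_type_lessE[OF assms(1)] by blast
  obtain C2 a2 where 2: "0 \<le> C2" "a2 < c" "\<And>t. t \<ge> 0 \<Longrightarrow> norm (g t) \<le> C2 * exp (a2 * t)"
    using exp_type_lessE[OF assms(2)] by blast
  have "norm (f t + g t) \<le> (C1 + C2) * exp (max a1 a2 * t)" if t: "t \<ge> 0" for t
  proof -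
    have "norm (f t + g t) \<le> C1 * exp (a1 * t) + C2 * exp (a2 * t)"
      using norm_triangle_ineq[of "f t" "g t"] 1(3)[OF t] 2(3)[OF t] by linarith
    also have "\<dots> \<le> C1 * exp (max a1 a2 * t) + C2 * exp (max a1 a2 * t)"
      using t 1 2 by (intro add_mono mult_left_mono) (auto intro!: mult_right_mono)
    finally show ?thesis by (simp add: algebra_simps)
  qed
  moreover have "max a1 a2 < c" using 1 2 by simp
  ultimately show ?thesis unfolding exp_type_less_def by blast
qed

lemma exp_type_less_mult:
  fixes f g :: "real \<Rightarrow> 'a::real_normed_div_algebra"
  assumes "exp_type_less f c1" "exp_type_less g c2"
  shows "exp_type_less (\<lambda>t. f t * g t) (c1 + c2)"
proof -
  obtain C1 a1 where 1: "0 \<le> C1" "a1 < c1" "\<And>t. t \<ge> 0 \<Longrightarrow> norm (f t) \<le> C1 * exp (a1 * t)"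
    using exp_type_lessE[OF assms(1)] by blast
  obtain C2 a2 where 2: "0 \<le> C2" "a2 < c2" "\<And>t. t \<ge> 0 \<Longrightarrow> norm (g t) \<le> C2 * exp (a2 * t)"
    using exp_type_lessE[OF assms(2)] by blast
  have "norm (f t * g t) \<le> C1 * C2 * exp ((a1 + a2) * t)" if t: "t \<ge> 0" for t
  proof -
    have "norm (f t * g t) \<le> (C1 * exp (a1 * t)) * (C2 * exp (a2 * t))"
      unfolding norm_mult by (intro mult_mono 1(3)[OF t] 2(3)[OF t]) (use 1 in auto)
    also have "\<dots> = C1 * C2 * exp ((a1 + a2) * t)" by (simp add: exp_add distrib_right)
    finally show ?thesis .
  qed
  moreover have "a1 + a2 < c1 + c2" using 1 2 by simp
  ultimately show ?thesis unfolding exp_type_less_def by blast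
qed

lemma exp_type_less_antiderivative:
  fixes f f' :: "real \<Rightarrow> complex"
  assumes c: "c > 0"
    and der: "\<And>t. t \<ge> 0 \<Longrightarrow> (f has_vector_derivative f' t) (at t within {0..})"
    and growth: "exp_type_less f' c"
  shows "exp_type_less f c"
proof -
  obtain C a where C: "0 \<le> C" "a < c" and bound: "\<And>t. t \<ge> 0 \<Longrightarrow> norm (f' t) \<le> C * exp (a * t)"
    using exp_type_lessE[OF growth] by blast
  define a1 where "a1 = max a 0"
  define \<delta> where "\<delta> = (c - a1) / 2"
  have a1: "a1 \<ge> 0" "a \<le> a1" by (simp_all add: a1_def)
  have \<delta>: "\<delta> > 0" "a1 + \<delta> < c" using C c unfolding \<delta>_def a1_def by (auto simp: field_simps)
  have "norm (f t) \<le> (norm (f 0) + C / \<delta>) * exp ((a1 + \<delta>) * t)" if t: "t \<ge> 0" for t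
  proof -
    have FTC: "(f' has_integral (f t - f 0)) {0..t}"
      by (rule fundamental_theorem_of_calculus[OF t])
         (auto intro: has_vector_derivative_within_subset[OF der])
    have bound_t: "norm (f' s) \<le> C * exp (a1 * t)" if "s \<in> {0..t} - {}" for s
    proof -
      have "norm (f' s) \<le> C * exp (a * s)" using bound that by auto
      also have "\<dots> \<le> C * exp (a1 * t)"
        using that C a1 by (intro mult_left_mono) (auto intro!: mult_mono)
      finally show ?thesis .
    qed
    \<comment> \<open>the factor \<open>t\<close> from integrating \<open>f'\<close> over \<open>[0, t]\<close> is absorbed into \<open>exp (\<delta> * t)\<close>\<close>
    have "norm (f t - f 0) \<le> C * exp (a1 * t) * t"
      using has_integral_bound_real[OF _ finite.emptyI FTC bound_t] C t by simp
    also have "\<dots> \<le> C * exp (a1 * t) * (exp (\<delta> * t) / \<delta>)"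
    proof -
      have "\<delta> * t \<le> exp (\<delta> * t)" using exp_ge_add_one_self[of "\<delta> * t"] by linarith
      then have "t \<le> exp (\<delta> * t) / \<delta>" using \<delta> by (simp add: field_simps)
      then show ?thesis using C by (intro mult_left_mono) auto
    qed
    also have "\<dots> = C / \<delta> * exp ((a1 + \<delta>) * t)" by (simp add: exp_add distrib_right)
    finally have "norm (f t - f 0) \<le> C / \<delta> * exp ((a1 + \<delta>) * t)" .
    moreover have "norm (f 0) \<le> norm (f 0) * exp ((a1 + \<delta>) * t)"
      using t \<delta> a1 by (simp add: mult_le_cancel_left1)
    moreover have "norm (f t) \<le> norm (f 0) + norm (f t - f 0)"
      by (metis norm_triangle_sub add.commute)
    ultimately show ?thesis by (simp add: algebra_simps)
  qed
  with \<delta> show ?thesis unfolding exp_type_less_def by blast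
qed

lemma one_plus_powr_le_exp:
  fixes s K \<epsilon> :: real
  assumes s: "s \<ge> 0" and K: "K > 0" and \<epsilon>: "\<epsilon> > 0"
  obtains C where "\<And>t. t \<ge> 0 \<Longrightarrow> (1 + t / K) powr s \<le> C * exp (\<epsilon> * t)"
proof (cases "s = 0")
  case True
  with \<epsilon> that[of 1] show ?thesis by simp
next
  case False
  with s have s: "s > 0" by simp
  define \<eta> where "\<eta> = \<epsilon> * K / s"
  have \<eta>: "\<eta> > 0" using s K \<epsilon> by (simp add: \<eta>_def)
  show ?thesis
  proof (rule that)
    fix t :: real assume t: "t \<ge> 0"
    have y: "1 + t / K > 0" using t K by (simp add: add_pos_nonneg)
    \<comment> \<open>the tangent-line bound \<open>ln y \<le> \<eta> y - 1 - ln \<eta>\<close>, with \<open>\<eta>\<close> tuned to the rate \<open>\<epsilon>\<close>\<close>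
    have "ln (\<eta> * (1 + t / K)) \<le> \<eta> * (1 + t / K) - 1"
      by (rule ln_le_minus_one) (use \<eta> y in simp)
    then have "ln (1 + t / K) \<le> \<eta> * (1 + t / K) - 1 - ln \<eta>"
      using \<eta> y by (simp add: ln_mult)
    then have "s * ln (1 + t / K) \<le> s * (\<eta> * (1 + t / K) - 1 - ln \<eta>)"
      using s by (intro mult_left_mono) auto
    also have "\<dots> = (s * \<eta> - s - s * ln \<eta>) + \<epsilon> * t"
      using s K by (simp add: \<eta>_def field_simps)
    finally have "exp (s * ln (1 + t / K)) \<le> exp ((s * \<eta> - s - s * ln \<eta>) + \<epsilon> * t)" by simp
    then show "(1 + t / K) powr s \<le> exp (s * \<eta> - s - s * ln \<eta>) * exp (\<epsilon> * t)"
      using y by (simp add: powr_def exp_add mult.commute)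
  qed
qed

lemma norm_powr_complex_le: "norm (z powr e) \<le> norm z powr Re e * exp (\<bar>Im e\<bar> * pi)"
proof -
  have "\<bar>Arg z\<bar> \<le> pi" using mpi_less_Arg[of z] Arg_le_pi[of z] by auto
  then have "\<bar>Im e * Arg z\<bar> \<le> \<bar>Im e\<bar> * pi" by (simp add: abs_mult mult_left_mono)
  then have "exp (- Im e * Arg z) \<le> exp (\<bar>Im e\<bar> * pi)" by simp
  then show ?thesis by (simp add: norm_powr_complex mult_left_mono)
qed

lemma exp_type_less_powr_ray:
  fixes u e :: complex
  assumes u: "u \<noteq> 0" and off: "\<And>t. t \<ge> 0 \<Longrightarrow> of_real t * cis \<theta> \<noteq> - u" and c: "c > 0"
  shows "exp_type_less (\<lambda>t. (1 + of_real t * cis \<theta> / u) powr e) c"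
proof -
  obtain \<delta> where \<delta>: "\<delta> > 0" and dist: "\<And>t. t \<ge> 0 \<Longrightarrow> \<delta> \<le> norm (of_real t * cis \<theta> - - u)"
    using ray_distance_pos[OF off] by blast
  define M where "M = exp (\<bar>Im e\<bar> * pi)"
  have M: "M > 0" by (simp add: M_def)
  have bound: "norm ((1 + of_real t * cis \<theta> / u) powr e) \<le> norm (1 + of_real t * cis \<theta> / u) powr Re e * M" for t
    unfolding M_def by (rule norm_powr_complex_le)
  show ?thesis
  proof (cases "Re e \<ge> 0")
    case True
    obtain C where C: "\<And>t. t \<ge> 0 \<Longrightarrow> (1 + t / norm u) powr Re e \<le> C * exp (c / 2 * t)"
      using one_plus_powr_le_exp[OF True _ half_gt_zero[OF c], of "norm u"] u by auto
    have "norm ((1 + of_real t * cis \<theta> / u) powr e) \<le> C * M * exp (c / 2 * t)" if t: "t \<ge> 0" for t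
    proof -
      have "norm (1 + of_real t * cis \<theta> / u) \<le> 1 + t / norm u"
        using norm_triangle_ineq[of 1 "of_real t * cis \<theta> / u"] t by (simp add: norm_divide norm_mult)
      then have "norm (1 + of_real t * cis \<theta> / u) powr Re e * M \<le> (1 + t / norm u) powr Re e * M"
        using M True by (intro mult_right_mono powr_mono2) auto
      also have "\<dots> \<le> C * exp (c / 2 * t) * M" using C[OF t] M by (intro mult_right_mono) auto
      finally show ?thesis using bound[of t] by (simp add: algebra_simps)
    qed
    then show ?thesis unfolding exp_type_less_def using c by (intro exI[of _ "C * M"] exI[of _ "c / 2"]) auto
  next
    case False
    have "norm ((1 + of_real t * cis \<theta> / u) powr e) \<le> (\<delta> / norm u) powr Re e * M * exp (0 * t)"
      if t: "t \<ge> 0" for t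
    proof -
      have "1 + of_real t * cis \<theta> / u = (of_real t * cis \<theta> - - u) / u" using u by (simp add: field_simps)
      then have "\<delta> / norm u \<le> norm (1 + of_real t * cis \<theta> / u)"
        using dist[OF t] u by (simp add: norm_divide divide_right_mono)
      then have "norm (1 + of_real t * cis \<theta> / u) powr Re e * M \<le> (\<delta> / norm u) powr Re e * M"
        using False \<delta> u M by (intro mult_right_mono powr_mono2') auto
      then show ?thesis using bound[of t] by simp
    qed
    then show ?thesis unfolding exp_type_less_def using c by blast
  qed
qed

lemma exp_type_less_inverse_ray:
  fixes u :: complex
  assumes u: "u \<noteq> 0" and off: "\<And>t. t \<ge> 0 \<Longrightarrow> of_real t * cis \<theta> \<noteq> - u" and c: "c > 0"
  shows "exp_type_less (\<lambda>t. inverse (1 + of_real t * cis \<theta> / u)) c"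
proof -
  obtain \<delta> where \<delta>: "\<delta> > 0" and dist: "\<And>t. t \<ge> 0 \<Longrightarrow> \<delta> \<le> norm (of_real t * cis \<theta> - - u)"
    using ray_distance_pos[OF off] by blast
  have "norm (inverse (1 + of_real t * cis \<theta> / u)) \<le> norm u / \<delta> * exp (0 * t)" if t: "t \<ge> 0" for t
  proof -
    have "1 + of_real t * cis \<theta> / u = (of_real t * cis \<theta> - - u) / u" using u by (simp add: field_simps)
    then have "norm (inverse (1 + of_real t * cis \<theta> / u)) = norm u / norm (of_real t * cis \<theta> - - u)"
      by (simp add: norm_divide)
    also have "\<dots> \<le> norm u / \<delta>"
      using dist[OF t] \<delta> by (intro divide_left_mono) (auto intro!: mult_pos_pos)
    finally show ?thesis by simp
  qed
  then show ?thesis unfolding exp_type_less_def using c by blast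
qed

lemma continuous_on_powr_ray:
  fixes u e :: complex
  assumes u: "u \<noteq> 0" and off: "\<And>t. t \<ge> 0 \<Longrightarrow> of_real t * cis \<theta> \<noteq> - u"
  shows "continuous_on {0..} (\<lambda>t::real. (1 + of_real t * cis \<theta> / u) powr e)"
proof (rule continuous_on_powr_complex)
  show "{0..} \<subseteq> {t. 0 \<le> Re (1 + of_real t * cis \<theta> / u) \<or> Im (1 + of_real t * cis \<theta> / u) \<noteq> 0}"
    using ray_shift_notin_nonpos_Reals[OF u off] by (auto simp: complex_nonpos_Reals_iff)
  show "0 < Re e" if "t \<in> {0..}" "1 + of_real t * cis \<theta> / u = 0" for t
    using ray_shift_notin_nonpos_Reals[OF u off, of t] that by simp
qed (use u in \<open>auto intro!: continuous_intros\<close>)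

lemma continuous_on_inverse_ray:
  fixes u :: complex
  assumes u: "u \<noteq> 0" and off: "\<And>t. t \<ge> 0 \<Longrightarrow> of_real t * cis \<theta> \<noteq> - u"
  shows "continuous_on {0..} (\<lambda>t::real. inverse (1 + of_real t * cis \<theta> / u))"
  using ray_shift_notin_nonpos_Reals[OF u off] u
  by (intro continuous_on_inverse continuous_intros) fastforce+

section \<open>Laplace integrals along a ray\<close>

lemma exp_type_less_mult_exp:
  fixes f :: "real \<Rightarrow> complex"
  assumes "exp_type_less f c"
  shows "exp_type_less (\<lambda>t. f t * exp (- (of_real t * w))) (c - Re w)"
proof -
  obtain C a where C: "0 \<le> C" "a < c" and bound: "\<And>t. t \<ge> 0 \<Longrightarrow> norm (f t) \<le> C * exp (a * t)"
    using exp_type_lessE[OF assms] by blast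
  have "norm (f t * exp (- (of_real t * w))) \<le> C * exp ((a - Re w) * t)" if "t \<ge> 0" for t
  proof -
    have "norm (f t * exp (- (of_real t * w))) \<le> C * exp (a * t) * exp (- (t * Re w))"
      using bound[OF that] by (simp add: norm_mult norm_exp_eq_Re mult_right_mono)
    also have "\<dots> = C * exp ((a - Re w) * t)"
      by (simp add: mult.assoc flip: exp_add, simp add: algebra_simps)
    finally show ?thesis .
  qed
  moreover have "a - Re w < c - Re w" using C by simp
  ultimately show ?thesis unfolding exp_type_less_def by blast
qed

lemma integrable_exp_bound:
  fixes a C :: real
  assumes "a < 0"
  shows "(\<lambda>t. C * exp (a * t)) integrable_on {0..}"
  using integrable_on_cmult_left[OF integrable_on_exp_minus_to_infinity[of "- a" 0], of C] assms
  by simp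

lemma exp_type_less_0_imp_integrable:
  fixes f :: "real \<Rightarrow> complex"
  assumes cont: "continuous_on {0..} f" and growth: "exp_type_less f 0"
  shows "f integrable_on {0..}"
proof -
  obtain C a where "a < 0" and bound: "\<And>t. t \<ge> 0 \<Longrightarrow> norm (f t) \<le> C * exp (a * t)"
    using exp_type_lessE[OF growth] by blast
  from integrable_exp_bound[OF \<open>a < 0\<close>] show ?thesis
  proof (rule measurable_bounded_by_integrable_imp_integrable[rotated])
    show "f \<in> borel_measurable (lebesgue_on {0..})"
      by (intro continuous_imp_measurable_on_sets_lebesgue cont) auto
  qed (use bound in auto)
qed

lemma exp_type_less_0_imp_tendsto_0:
  assumes "exp_type_less f 0"
  shows "(f \<longlongrightarrow> 0) at_top"
proof -
  obtain C a where "a < 0" and bound: "\<And>t. t \<ge> 0 \<Longrightarrow> norm (f t) \<le> C * exp (a * t)"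
    using exp_type_lessE[OF assms] by blast
  show ?thesis
  proof (rule Lim_null_comparison)
    show "\<forall>\<^sub>F t in at_top. norm (f t) \<le> C * exp (a * t)"
      using eventually_ge_at_top[of 0] by eventually_elim (rule bound)
    show "((\<lambda>t. C * exp (a * t)) \<longlongrightarrow> 0) at_top"
      using \<open>a < 0\<close> by real_asymp
  qed
qed

lemma laplace_integrable:
  fixes f :: "real \<Rightarrow> complex"
  assumes "continuous_on {0..} f" "exp_type_less f (Re w)"
  shows "(\<lambda>t. f t * exp (- (of_real t * w))) integrable_on {0..}"
  using exp_type_less_mult_exp[OF assms(2), of w] assms(1)
  by (auto intro!: exp_type_less_0_imp_integrable continuous_intros)

lemma integral_of_vanishing_antiderivative:
  fixes \<Phi> G :: "real \<Rightarrow> complex"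
  assumes der: "\<And>t. t \<ge> 0 \<Longrightarrow> (\<Phi> has_vector_derivative G t) (at t within {0..})"
    and growth: "exp_type_less G 0" and lim: "(\<Phi> \<longlongrightarrow> 0) at_top"
  shows "integral {0..} G = - \<Phi> 0"
proof -
  obtain C a where "0 \<le> C" "a < 0" and bound: "\<And>t. t \<ge> 0 \<Longrightarrow> norm (G t) \<le> C * exp (a * t)"
    using exp_type_lessE[OF growth] by blast
  define G_trunc where "G_trunc = (\<lambda>k::nat. \<lambda>t. if t \<in> {..real k} then G t else 0)"
  have FTC: "(G has_integral (\<Phi> T - \<Phi> 0)) {0..T}" if "T \<ge> 0" for T
    by (rule fundamental_theorem_of_calculus[OF that])
       (auto intro: has_vector_derivative_within_subset[OF der])
  have trunc_integral: "integral {0..} (G_trunc k) = \<Phi> (real k) - \<Phi> 0" for k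
  proof -
    have "integral {0..} (G_trunc k) = integral ({..real k} \<inter> {0..}) G"
      unfolding G_trunc_def by (rule integral_restrict_Int)
    also have "{..real k} \<inter> {0..} = {0..real k}" by auto
    finally show ?thesis using FTC[of "real k"] by (simp add: integral_unique)
  qed
  have "(\<lambda>k. integral {0..} (G_trunc k)) \<longlonglongrightarrow> integral {0..} G"
  proof (rule dominated_convergence(2)[OF _ integrable_exp_bound[OF \<open>a < 0\<close>]])
    show "G_trunc k integrable_on {0..}" for k
    proof -
      have "G integrable_on ({..real k} \<inter> {0..})"
        using FTC[of "real k"] by (auto simp: Int_commute atLeastAtMost_def)
      then show ?thesis unfolding G_trunc_def by (subst integrable_restrict_Int)
    qed
    show "norm (G_trunc k t) \<le> C * exp (a * t)" if "t \<in> {0..}" for k t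
      using that bound[of t] \<open>0 \<le> C\<close> by (auto simp: G_trunc_def)
    show "(\<lambda>k. G_trunc k t) \<longlonglongrightarrow> G t" for t
    proof (rule tendsto_eventually)
      show "\<forall>\<^sub>F k in sequentially. G_trunc k t = G t"
        using eventually_ge_at_top[of "nat \<lceil>t\<rceil>"]
        by eventually_elim (use real_nat_ceiling_ge[of t] in \<open>auto simp: G_trunc_def\<close>)
    qed
  qed
  moreover have "(\<lambda>k. integral {0..} (G_trunc k)) \<longlonglongrightarrow> 0 - \<Phi> 0"
    unfolding trunc_integral
    by (intro tendsto_diff filterlim_compose[OF lim filterlim_real_sequentially] tendsto_const)
  ultimately show ?thesis using LIMSEQ_unique by fastforce
qed

lemma laplace_integration_by_parts:
  fixes f f' :: "real \<Rightarrow> complex"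
  assumes der: "\<And>t. t \<ge> 0 \<Longrightarrow> (f has_vector_derivative f' t) (at t within {0..})"
    and cont': "continuous_on {0..} f'"
    and growth: "exp_type_less f (Re w)" and growth': "exp_type_less f' (Re w)"
  shows "integral {0..} (\<lambda>t. f t * exp (- (of_real t * w)) * w)
           = f 0 + integral {0..} (\<lambda>t. f' t * exp (- (of_real t * w)))"
proof -
  define E where "E = (\<lambda>t::real. exp (- (of_real t * w)))"
  have cont: "continuous_on {0..} f"
    by (rule continuous_on_vector_derivative) (use der in auto)
  have E_der: "(E has_vector_derivative (- w * E t)) (at t within X)" for t X
  proof -
    have "((\<lambda>z. exp (- (z * w))) has_field_derivative (exp (- (of_real t * w)) * (- w))) (at (of_real t))"
      by (auto intro!: derivative_eq_intros)
    from has_vector_derivative_real_field[OF this] show ?thesis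
      by (simp add: E_def mult.commute)
  qed
  have antider: "((\<lambda>t. - (f t * E t)) has_vector_derivative (f t * E t * w - f' t * E t)) (at t within {0..})"
    if "t \<ge> 0" for t
    using has_vector_derivative_mult[OF der[OF that] E_der[of t "{0..}"]]
    by (auto dest: has_vector_derivative_minus simp: algebra_simps)
  have fE: "exp_type_less (\<lambda>t. f t * E t) 0" and f'E: "exp_type_less (\<lambda>t. f' t * E t) 0"
    using exp_type_less_mult_exp[OF growth, of w] exp_type_less_mult_exp[OF growth', of w]
    by (simp_all add: E_def)
  have "exp_type_less (\<lambda>t. f t * E t * w - f' t * E t) 0"
    using exp_type_less_add[OF exp_type_less_cmult[OF fE, of w] exp_type_less_cmult[OF f'E, of "- 1"]]
    by (simp add: mult.commute)
  moreover have "((\<lambda>t. - (f t * E t)) \<longlongrightarrow> 0) at_top"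
    using tendsto_minus[OF exp_type_less_0_imp_tendsto_0[OF fE]] by simp
  ultimately have "integral {0..} (\<lambda>t. f t * E t * w - f' t * E t) = f 0"
    using integral_of_vanishing_antiderivative[OF antider] by (simp add: E_def)
  moreover have "integral {0..} (\<lambda>t. f t * E t * w - f' t * E t)
      = integral {0..} (\<lambda>t. f t * E t * w) - integral {0..} (\<lambda>t. f' t * E t)"
    unfolding E_def using laplace_integrable[OF cont growth] laplace_integrable[OF cont' growth']
    by (intro integral_diff integrable_on_mult_left)
  ultimately show ?thesis by (simp add: E_def diff_eq_eq add.commute)
qed

lemma ray_laplace_eq_integral:
  "ray_laplace \<theta> g x =
     integral {0..} (\<lambda>t. g (of_real t * cis \<theta>) * exp (- (of_real t * (cis \<theta> / x))) * (cis \<theta> / x))"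
  unfolding ray_laplace_def by (simp add: mult.assoc)

lemma ray_laplace_cong:
  "(\<And>t. t \<ge> 0 \<Longrightarrow> f (of_real t * cis \<theta>) = g (of_real t * cis \<theta>))
     \<Longrightarrow> ray_laplace \<theta> f x = ray_laplace \<theta> g x"
  unfolding ray_laplace_def by (intro integral_cong) auto

lemma ray_laplace_lincomb:
  assumes "continuous_on {0..} (\<lambda>t. f (of_real t * cis \<theta>))"
    and "exp_type_less (\<lambda>t. f (of_real t * cis \<theta>)) (Re (cis \<theta> / x))"
    and "continuous_on {0..} (\<lambda>t. g (of_real t * cis \<theta>))"
    and "exp_type_less (\<lambda>t. g (of_real t * cis \<theta>)) (Re (cis \<theta> / x))"
  shows "ray_laplace \<theta> (\<lambda>\<xi>. a * f \<xi> + b * g \<xi>) x = a * ray_laplace \<theta> f x + b * ray_laplace \<theta> g x"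
proof -
  define w where "w = cis \<theta> / x"
  define F where "F = (\<lambda>t. f (of_real t * cis \<theta>) * exp (- (of_real t * w)) * w)"
  define G where "G = (\<lambda>t. g (of_real t * cis \<theta>) * exp (- (of_real t * w)) * w)"
  have "F integrable_on {0..}" "G integrable_on {0..}"
    unfolding F_def G_def
    using laplace_integrable[OF assms(1,2)[folded w_def]] laplace_integrable[OF assms(3,4)[folded w_def]]
    by (auto intro: integrable_on_mult_left)
  then have "integral {0..} (\<lambda>t. a * F t + b * G t) = a * integral {0..} F + b * integral {0..} G"
    by (simp add: integral_add integrable_on_mult_right)
  moreover have "(\<lambda>t. a * F t + b * G t) =
      (\<lambda>t. (a * f (of_real t * cis \<theta>) + b * g (of_real t * cis \<theta>)) * exp (- (of_real t * w)) * w)"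
    by (simp add: F_def G_def algebra_simps)
  ultimately show ?thesis
    unfolding ray_laplace_eq_integral w_def[symmetric] F_def G_def by simp
qed

lemma has_vector_derivative_along_ray:
  assumes "open D" "g holomorphic_on D" "of_real t * cis \<theta> \<in> D"
  shows "((\<lambda>t. g (of_real t * cis \<theta>)) has_vector_derivative (deriv g (of_real t * cis \<theta>) * cis \<theta>)) (at t within X)"
proof -
  have "((\<lambda>z. g (z * cis \<theta>)) has_field_derivative (deriv g (of_real t * cis \<theta>) * cis \<theta>)) (at (of_real t))"
  proof (rule DERIV_chain2[of g])
    show "(g has_field_derivative deriv g (of_real t * cis \<theta>)) (at (of_real t * cis \<theta>))"
      using assms by (intro holomorphic_derivI)
    show "((\<lambda>z. z * cis \<theta>) has_field_derivative cis \<theta>) (at (of_real t))"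
      by (auto intro!: derivative_eq_intros)
  qed
  from has_vector_derivative_real_field[OF this] show ?thesis
    by (rule has_vector_derivative_at_within)
qed

lemma ray_laplace_deriv:
  fixes g :: "complex \<Rightarrow> complex"
  assumes D: "open D" "g holomorphic_on D" "\<And>t. t \<ge> 0 \<Longrightarrow> of_real t * cis \<theta> \<in> D"
    and x: "x \<noteq> 0"
    and growth: "exp_type_less (\<lambda>t. g (of_real t * cis \<theta>)) (Re (cis \<theta> / x))"
    and growth': "exp_type_less (\<lambda>t. deriv g (of_real t * cis \<theta>)) (Re (cis \<theta> / x))"
  shows "ray_laplace \<theta> g x = g 0 + x * ray_laplace \<theta> (deriv g) x"
proof -
  define w where "w = cis \<theta> / x"
  define f' where "f' = (\<lambda>t. deriv g (of_real t * cis \<theta>) * cis \<theta>)"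
  have der: "((\<lambda>t. g (of_real t * cis \<theta>)) has_vector_derivative f' t) (at t within {0..})"
    if "t \<ge> 0" for t
    unfolding f'_def using D that by (intro has_vector_derivative_along_ray)
  have "continuous_on {0..} (\<lambda>t. deriv g (of_real t * cis \<theta>))"
    using has_vector_derivative_along_ray[OF D(1) holomorphic_deriv[OF D(2,1)] D(3)]
    by (intro continuous_on_vector_derivative) auto
  then have cont': "continuous_on {0..} f'"
    unfolding f'_def by (intro continuous_intros)
  have growth'': "exp_type_less f' (Re w)"
    using exp_type_less_cmult[OF growth', of "cis \<theta>"] unfolding f'_def w_def by (simp add: mult.commute)
  have "ray_laplace \<theta> g x = g 0 + integral {0..} (\<lambda>t. f' t * exp (- (of_real t * w)))"
    using laplace_integration_by_parts[OF der cont' growth[folded w_def] growth'']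
    unfolding ray_laplace_eq_integral w_def[symmetric] by simp
  also have "(\<lambda>t. f' t * exp (- (of_real t * w))) =
      (\<lambda>t. x * (deriv g (of_real t * cis \<theta>) * exp (- (of_real t * w)) * w))"
    using x by (simp add: f'_def w_def mult_ac)
  finally show ?thesis
    unfolding ray_laplace_eq_integral w_def[symmetric] by simp
qed

lemma exp_type_less_higher_deriv_ray:
  fixes h :: "complex \<Rightarrow> complex"
  assumes D: "open D" "h holomorphic_on D" "\<And>t. t \<ge> 0 \<Longrightarrow> of_real t * cis \<theta> \<in> D"
    and c: "c > 0"
    and growth: "exp_type_less (\<lambda>t. (deriv ^^ M) h (of_real t * cis \<theta>)) c"
    and k: "k \<le> M"
  shows "exp_type_less (\<lambda>t. (deriv ^^ k) h (of_real t * cis \<theta>)) c"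
proof -
  have "exp_type_less (\<lambda>t. (deriv ^^ (M - j)) h (of_real t * cis \<theta>)) c" if "j \<le> M" for j
    using that
  proof (induction j)
    case 0
    then show ?case using growth by simp
  next
    case (Suc j)
    then have Suc_eq: "Suc (M - Suc j) = M - j" by simp
    have growth_Suc: "exp_type_less (\<lambda>t. (deriv ^^ (M - j)) h (of_real t * cis \<theta>) * cis \<theta>) c"
      using exp_type_less_cmult[OF Suc.IH, of "cis \<theta>"] Suc.prems by (simp add: mult.commute)
    have der: "((\<lambda>t. (deriv ^^ (M - Suc j)) h (of_real t * cis \<theta>)) has_vector_derivative
        (deriv ^^ (M - j)) h (of_real t * cis \<theta>) * cis \<theta>) (at t within {0..})" if "t \<ge> 0" for t
      using has_vector_derivative_along_ray[OF D(1) holomorphic_higher_deriv[OF D(2,1)] D(3)[OF that]]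
      by (simp flip: Suc_eq)
    show ?case by (rule exp_type_less_antiderivative[OF c der growth_Suc])
  qed
  from this[of "M - k"] k show ?thesis by simp
qed

lemma ray_laplace_taylor:
  fixes h :: "complex \<Rightarrow> complex"
  assumes D: "open D" "h holomorphic_on D" "\<And>t. t \<ge> 0 \<Longrightarrow> of_real t * cis \<theta> \<in> D"
    and x: "x \<noteq> 0" "Re (cis \<theta> / x) > 0"
    and growth: "exp_type_less (\<lambda>t. (deriv ^^ M) h (of_real t * cis \<theta>)) (Re (cis \<theta> / x))"
  shows "ray_laplace \<theta> h x = (\<Sum>k<M. (deriv ^^ k) h 0 * x ^ k) + x ^ M * ray_laplace \<theta> ((deriv ^^ M) h) x"
proof -
  note growth_k = exp_type_less_higher_deriv_ray[OF D x(2) growth]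
  have step: "ray_laplace \<theta> ((deriv ^^ k) h) x = (deriv ^^ k) h 0 + x * ray_laplace \<theta> ((deriv ^^ Suc k) h) x"
    if "k < M" for k
    using ray_laplace_deriv[OF D(1) holomorphic_higher_deriv[OF D(2,1)] D(3) x(1)]
      growth_k[of k] growth_k[of "Suc k"] that by simp
  have "ray_laplace \<theta> h x = (\<Sum>k<j. (deriv ^^ k) h 0 * x ^ k) + x ^ j * ray_laplace \<theta> ((deriv ^^ j) h) x"
    if "j \<le> M" for j
    using that
  proof (induction j)
    case 0
    then show ?case by simp
  next
    case (Suc j)
    then show ?case using step[of j] by (simp add: algebra_simps)
  qed
  then show ?thesis by simp
qed

section \<open>The coefficient recurrence\<close>

lemma pochhammer_coeff_Suc:
  fixes A p :: "'a::field"
  assumes "p \<noteq> 0" "\<And>n. c n = (-1) ^ n * pochhammer A n / p ^ n"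
  shows "p * c (Suc n) = - (A + of_nat n) * c n"
  unfolding assms(2) using assms(1) by (simp add: pochhammer_rec' field_simps)

lemma sum_atMost_diff_swap:
  fixes n :: nat
  shows "(\<Sum>k\<le>n. F k (n - k)) = (\<Sum>k\<le>n. F (n - k) k)"
  by (rule sum.reindex_bij_witness[where i="\<lambda>k. n - k" and j="\<lambda>k. n - k"]) auto

lemma cauchy_product_Suc:
  fixes b c :: "nat \<Rightarrow> 'a::comm_ring_1"
  assumes c0: "c 0 = 1" and c_Suc: "\<And>k. p * c (Suc k) = - (A + of_nat k) * c k"
  shows "p * (\<Sum>k\<le>Suc n. c k * b (Suc n - k)) = p * b (Suc n) - (\<Sum>k\<le>n. (A + of_nat k) * c k * b (n - k))"
proof -
  have "p * (\<Sum>k\<le>Suc n. c k * b (Suc n - k)) = p * b (Suc n) + (\<Sum>k\<le>n. p * c (Suc k) * b (n - k))"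
    by (subst sum.atMost_Suc_shift) (simp add: c0 distrib_left sum_distrib_left mult.assoc)
  also have "(\<Sum>k\<le>n. p * c (Suc k) * b (n - k)) = - (\<Sum>k\<le>n. (A + of_nat k) * c k * b (n - k))"
    unfolding sum_negf[symmetric] by (intro sum.cong refl) (simp add: c_Suc, simp add: algebra_simps)
  finally show ?thesis by simp
qed

lemma cauchy_product_pochhammer_recurrence:
  fixes A B p q :: "'a::field" and b c \<omega> :: "nat \<Rightarrow> 'a"
  assumes p: "p \<noteq> 0" and q: "q \<noteq> 0"
    and b_def: "\<And>n. b n = (-1) ^ n * pochhammer B n / q ^ n"
    and c_def: "\<And>n. c n = (-1) ^ n * pochhammer A n / p ^ n"
    and \<omega>_def: "\<And>n. \<omega> n = (\<Sum>k\<le>n. c k * b (n - k))"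
  shows "(p + q) * \<omega> (Suc n) + (A + B + of_nat n) * \<omega> n = q * c (Suc n) + p * b (Suc n)"
proof -
  define SA where "SA = (\<Sum>k\<le>n. (A + of_nat k) * c k * b (n - k))"
  define SB where "SB = (\<Sum>k\<le>n. (B + of_nat (n - k)) * c k * b (n - k))"
  have P: "p * \<omega> (Suc n) = p * b (Suc n) - SA"
    unfolding \<omega>_def SA_def
    using pochhammer_coeff_Suc[OF p c_def] by (intro cauchy_product_Suc) (simp_all add: c_def)
  have Q: "q * \<omega> (Suc n) = q * c (Suc n) - SB"
  proof -
    have "q * \<omega> (Suc n) = q * (\<Sum>k\<le>Suc n. b k * c (Suc n - k))"
      unfolding \<omega>_def by (subst sum_atMost_diff_swap) (simp add: mult.commute)
    also have "\<dots> = q * c (Suc n) - (\<Sum>k\<le>n. (B + of_nat k) * b k * c (n - k))"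
      using pochhammer_coeff_Suc[OF q b_def] by (intro cauchy_product_Suc) (simp_all add: b_def)
    also have "(\<Sum>k\<le>n. (B + of_nat k) * b k * c (n - k)) = SB"
      unfolding SB_def by (subst sum_atMost_diff_swap) (simp add: mult_ac)
    finally show ?thesis .
  qed
  have S: "SA + SB = (A + B + of_nat n) * \<omega> n"
  proof -
    have "SA + SB = (\<Sum>k\<le>n. ((A + of_nat k) + (B + of_nat (n - k))) * (c k * b (n - k)))"
      unfolding SA_def SB_def sum.distrib[symmetric] by (simp add: algebra_simps)
    also have "\<dots> = (\<Sum>k\<le>n. (A + B + of_nat n) * (c k * b (n - k)))"
      by (intro sum.cong refl) (simp add: of_nat_diff algebra_simps)
    finally show ?thesis by (simp add: \<omega>_def sum_distrib_left)
  qed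
  have "(p + q) * \<omega> (Suc n) + (A + B + of_nat n) * \<omega> n = p * \<omega> (Suc n) + q * \<omega> (Suc n) + (SA + SB)"
    by (simp only: S distrib_right)
  also have "\<dots> = q * c (Suc n) + p * b (Suc n)"
    unfolding P Q by (simp add: algebra_simps)
  finally show ?thesis .
qed

lemma linear_recurrence_solution:
  fixes \<sigma> r :: "'a::field_char_0" and d \<omega> :: "nat \<Rightarrow> 'a"
  assumes r: "r \<noteq> 0" and init: "r * \<omega> 0 = d 0"
    and rec: "\<And>n. r * \<omega> (Suc n) + (\<sigma> + of_nat n) * \<omega> n = d (Suc n)"
  shows "r * \<omega> m = (\<Sum>l\<le>m. d l * ((-1) ^ (m - l) * pochhammer (\<sigma> + of_nat l) (m - l) / r ^ (m - l)))"
proof (induction m)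
  case 0
  then show ?case using init by simp
next
  case (Suc m)
  have kernel_Suc: "(\<sigma> + of_nat m) / r * ((-1) ^ (m - l) * pochhammer (\<sigma> + of_nat l) (m - l) / r ^ (m - l))
      = - ((-1) ^ (Suc m - l) * pochhammer (\<sigma> + of_nat l) (Suc m - l) / r ^ (Suc m - l))" if "l \<le> m" for l
  proof -
    have "Suc m - l = Suc (m - l)" using that by (simp add: Suc_diff_le)
    moreover have "\<sigma> + of_nat l + of_nat (m - l) = \<sigma> + of_nat m" using that by (simp add: of_nat_diff)
    ultimately show ?thesis using r by (simp add: pochhammer_rec' field_simps)
  qed
  have "(\<sigma> + of_nat m) / r * (r * \<omega> m)
      = (\<Sum>l\<le>m. d l * ((\<sigma> + of_nat m) / r * ((-1) ^ (m - l) * pochhammer (\<sigma> + of_nat l) (m - l) / r ^ (m - l))))"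
    unfolding Suc.IH sum_distrib_left by (simp add: mult_ac)
  also have "\<dots> = - (\<Sum>l\<le>m. d l * ((-1) ^ (Suc m - l) * pochhammer (\<sigma> + of_nat l) (Suc m - l) / r ^ (Suc m - l)))"
    unfolding sum_negf[symmetric] by (intro sum.cong refl) (simp only: atMost_iff kernel_Suc mult_minus_right)
  finally have "(\<sigma> + of_nat m) * \<omega> m = - (\<Sum>l\<le>m. d l *
      ((-1) ^ (Suc m - l) * pochhammer (\<sigma> + of_nat l) (Suc m - l) / r ^ (Suc m - l)))"
    using r by simp
  with rec[of m] show ?case by (simp add: diff_eq_eq add.commute)
qed

lemma sum_triangle_swap:
  fixes F :: "nat \<Rightarrow> nat \<Rightarrow> 'a::comm_monoid_add"
  shows "(\<Sum>l\<le>M. \<Sum>s\<le>M - l. F l s) = (\<Sum>m\<le>M. \<Sum>l\<le>m. F l (m - l))"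
proof -
  have "Sigma {..M} (\<lambda>l. {..M - l}) = {(l, s). l + s \<le> M}" by auto
  then show ?thesis
    using sum.triangle_reindex_eq[of "\<lambda>l s. F l s" M] by (simp add: sum.Sigma)
qed

lemma linear_recurrence_partial_sum:
  fixes r \<sigma> x :: "'a::field_char_0" and d \<omega> :: "nat \<Rightarrow> 'a"
  assumes r: "r \<noteq> 0" and init: "r * \<omega> 0 = d 0"
    and rec: "\<And>n. r * \<omega> (Suc n) + (\<sigma> + of_nat n) * \<omega> n = d (Suc n)"
  shows "r * (\<Sum>k\<le>M. \<omega> k * x ^ k) =
    (\<Sum>l=0..M. d l * x ^ l * (\<Sum>s=0..M-l. (-1) ^ s * pochhammer (\<sigma> + of_nat l) s / r ^ s * x ^ s))"
proof -
  define F where "F = (\<lambda>l s. d l * ((-1) ^ s * pochhammer (\<sigma> + of_nat l) s / r ^ s) * x ^ (l + s))"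
  have "r * (\<Sum>k\<le>M. \<omega> k * x ^ k) = (\<Sum>m\<le>M. (r * \<omega> m) * x ^ m)"
    by (simp add: sum_distrib_left mult.assoc)
  also have "\<dots> = (\<Sum>m\<le>M. \<Sum>l\<le>m. F l (m - l))"
    unfolding linear_recurrence_solution[OF r init rec] sum_distrib_right F_def
    by (intro sum.cong refl) simp
  also have "\<dots> = (\<Sum>l\<le>M. \<Sum>s\<le>M - l. F l s)" by (rule sum_triangle_swap[symmetric])
  also have "\<dots> = (\<Sum>l=0..M. d l * x ^ l * (\<Sum>s=0..M-l. (-1) ^ s * pochhammer (\<sigma> + of_nat l) s / r ^ s * x ^ s))"
    unfolding atLeast0AtMost sum_distrib_left F_def
    by (intro sum.cong refl) (simp add: power_add mult_ac)
  finally show ?thesis .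
qed

lemma cauchy_product_partial_sum:
  fixes A B p q x :: "'a::field_char_0" and b c \<omega> :: "nat \<Rightarrow> 'a"
  assumes p: "p \<noteq> 0" and q: "q \<noteq> 0" and r: "p + q \<noteq> 0"
    and b_def: "\<And>n. b n = (-1) ^ n * pochhammer B n / q ^ n"
    and c_def: "\<And>n. c n = (-1) ^ n * pochhammer A n / p ^ n"
    and \<omega>_def: "\<And>n. \<omega> n = (\<Sum>k\<le>n. c k * b (n - k))"
    and M: "M \<ge> 1"
  shows "(p + q) * (\<Sum>k<M. \<omega> k * x ^ k) = (\<Sum>l=0..M-1. (p * b l + q * c l) * x ^ l *
          (\<Sum>s=0..M-1-l. (-1) ^ s * pochhammer (A + B + of_nat l) s / (p + q) ^ s * x ^ s))"
proof -
  have "{..<M} = {..M - 1}" using M by auto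
  moreover have "(p + q) * \<omega> 0 = p * b 0 + q * c 0" by (simp add: \<omega>_def b_def c_def)
  moreover have "(p + q) * \<omega> (Suc n) + (A + B + of_nat n) * \<omega> n = p * b (Suc n) + q * c (Suc n)" for n
    using cauchy_product_pochhammer_recurrence[OF p q b_def c_def \<omega>_def, of n] by (simp add: add.commute)
  ultimately show ?thesis
    using linear_recurrence_partial_sum[OF r, where \<omega> = \<omega> and d = "\<lambda>l. p * b l + q * c l"
        and \<sigma> = "A + B" and M = "M - 1" and x = x] by simp
qed

section \<open>The differential equation of the Borel transform\<close>

lemma has_fps_expansion_one_plus_div_powr:
  fixes p e :: complex
  assumes p: "p \<noteq> 0"
  shows "(\<lambda>z. (1 + z / p) powr e) has_fps_expansion Abs_fps (\<lambda>n. (e gchoose n) / p ^ n)"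
proof (rule has_fps_expansionI)
  have "\<forall>\<^sub>F z in nhds 0. z \<in> ball 0 (norm p)"
    using p by (intro eventually_nhds_in_open) auto
  then show "\<forall>\<^sub>F z in nhds 0. (\<lambda>n. Abs_fps (\<lambda>n. (e gchoose n) / p ^ n) $ n * z ^ n) sums (1 + z / p) powr e"
  proof eventually_elim
    case (elim z)
    then have "norm (z / p) < 1" using p by (simp add: norm_divide divide_less_eq)
    from gen_binomial_complex[OF this, of e] show ?case by (simp add: power_divide)
  qed
qed

lemma DERIV_one_plus_div_powr:
  fixes p e z :: complex
  assumes p: "p \<noteq> 0" and slit: "1 + z / p \<notin> \<real>\<^sub>\<le>\<^sub>0"
  shows "((\<lambda>z. (1 + z / p) powr e) has_field_derivative (e / p * (1 + z / p) powr (e - 1))) (at z)"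
proof -
  have "((\<lambda>w. w powr e) has_field_derivative (e * (1 + z / p) powr (e - 1))) (at (1 + z / p))"
    by (rule has_field_derivative_powr[OF slit])
  moreover have "((\<lambda>z. 1 + z / p) has_field_derivative (1 / p)) (at z)"
    using p by (auto intro!: derivative_eq_intros)
  ultimately have "((\<lambda>z. (1 + z / p) powr e) has_field_derivative (e * (1 + z / p) powr (e - 1) * (1 / p))) (at z)"
    by (rule DERIV_chain2)
  then show ?thesis by (simp add: field_simps)
qed

lemma gchoose_pochhammer_coeff:
  fixes A p :: complex and c :: "nat \<Rightarrow> complex"
  assumes p: "p \<noteq> 0" and c_def: "\<And>n. c n = (-1) ^ n * pochhammer A n / p ^ n"
  shows "c 1 * (((- A - 1) gchoose n) / p ^ n) = c (Suc n) / fact n"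
proof -
  have "(- A - 1) gchoose n = (-1) ^ n * pochhammer (1 + A) n / fact n"
    by (simp add: gbinomial_pochhammer)
  moreover have "pochhammer A (Suc n) = A * pochhammer (1 + A) n"
    by (subst pochhammer_rec) (simp only: add.commute)
  ultimately show ?thesis using p unfolding c_def by (simp add: field_simps)
qed

text \<open>Read coefficientwise, the differential equation is the recurrence divided by \<open>n!\<close>.\<close>

lemma borel_ode_fps_identity:
  fixes A B p q r \<sigma> :: complex and b c \<omega> :: "nat \<Rightarrow> complex"
  defines "H \<equiv> Abs_fps (\<lambda>n. \<omega> n / fact n)"
  assumes p: "p \<noteq> 0" and q: "q \<noteq> 0"
    and c_def: "\<And>n. c n = (-1) ^ n * pochhammer A n / p ^ n"
    and b_def: "\<And>n. b n = (-1) ^ n * pochhammer B n / q ^ n"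
    and rec: "\<And>n. r * \<omega> (Suc n) + (\<sigma> + of_nat n) * \<omega> n = q * c (Suc n) + p * b (Suc n)"
  shows "(fps_const r + fps_X) * fps_deriv H + fps_const \<sigma> * H =
           fps_const (q * c 1) * Abs_fps (\<lambda>n. ((- A - 1) gchoose n) / p ^ n)
         + fps_const (p * b 1) * Abs_fps (\<lambda>n. ((- B - 1) gchoose n) / q ^ n)"
proof (rule fps_ext)
  fix n :: nat
  have deriv_coeff: "of_nat (Suc n) * (\<omega> (Suc n) / fact (Suc n)) = \<omega> (Suc n) / (fact n :: complex)"
    by (simp add: field_simps del: of_nat_Suc)
  have X_deriv_coeff: "(fps_X * fps_deriv H) $ n = of_nat n * \<omega> n / fact n"
    by (cases n) (simp_all add: H_def field_simps del: of_nat_Suc)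
  have "((fps_const r + fps_X) * fps_deriv H + fps_const \<sigma> * H) $ n
      = (r * \<omega> (Suc n) + (\<sigma> + of_nat n) * \<omega> n) / fact n"
    using deriv_coeff X_deriv_coeff by (simp add: H_def distrib_right add_divide_distrib del: of_nat_Suc)
  also have "\<dots> = q * (c (Suc n) / fact n) + p * (b (Suc n) / fact n)"
    by (simp add: rec add_divide_distrib)
  also have "\<dots> = q * (c 1 * (((- A - 1) gchoose n) / p ^ n)) + p * (b 1 * (((- B - 1) gchoose n) / q ^ n))"
    by (simp only: gchoose_pochhammer_coeff[OF p c_def] gchoose_pochhammer_coeff[OF q b_def])
  also have "\<dots> = (fps_const (q * c 1) * Abs_fps (\<lambda>n. ((- A - 1) gchoose n) / p ^ n)
         + fps_const (p * b 1) * Abs_fps (\<lambda>n. ((- B - 1) gchoose n) / q ^ n)) $ n"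
    by (simp add: mult.assoc)
  finally show "((fps_const r + fps_X) * fps_deriv H + fps_const \<sigma> * H) $ n = \<dots>" .
qed

lemma borel_ode_near_zero:
  fixes h :: "complex \<Rightarrow> complex" and A B p q r \<sigma> :: complex and b c \<omega> :: "nat \<Rightarrow> complex"
  assumes p: "p \<noteq> 0" and q: "q \<noteq> 0"
    and h: "h has_fps_expansion Abs_fps (\<lambda>n. \<omega> n / fact n)"
    and c_def: "\<And>n. c n = (-1) ^ n * pochhammer A n / p ^ n"
    and b_def: "\<And>n. b n = (-1) ^ n * pochhammer B n / q ^ n"
    and rec: "\<And>n. r * \<omega> (Suc n) + (\<sigma> + of_nat n) * \<omega> n = q * c (Suc n) + p * b (Suc n)"
  shows "\<forall>\<^sub>F z in nhds 0. (r + z) * deriv h z + \<sigma> * h z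
            = q * c 1 * (1 + z / p) powr (- A - 1) + p * b 1 * (1 + z / q) powr (- B - 1)"
proof -
  have "(\<lambda>z. (r + z) * deriv h z + \<sigma> * h z
            - (q * c 1 * (1 + z / p) powr (- A - 1) + p * b 1 * (1 + z / q) powr (- B - 1)))
        has_fps_expansion ((fps_const r + fps_X) * fps_deriv (Abs_fps (\<lambda>n. \<omega> n / fact n))
            + fps_const \<sigma> * Abs_fps (\<lambda>n. \<omega> n / fact n)
            - (fps_const (q * c 1) * Abs_fps (\<lambda>n. ((- A - 1) gchoose n) / p ^ n)
               + fps_const (p * b 1) * Abs_fps (\<lambda>n. ((- B - 1) gchoose n) / q ^ n)))"
    by (intro fps_expansion_intros h has_fps_expansion_one_plus_div_powr p q)
  also have "\<dots> = 0"
    by (simp add: borel_ode_fps_identity[OF p q c_def b_def rec])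
  finally show ?thesis by (simp add: has_fps_expansion_0_iff)
qed

lemma borel_ode_on_domain:
  fixes h :: "complex \<Rightarrow> complex" and A B p q r \<sigma> :: complex and b c :: "nat \<Rightarrow> complex"
  assumes D: "open D" "connected D" "0 \<in> D" and hol: "h holomorphic_on D"
    and slit_p: "\<And>z. z \<in> D \<Longrightarrow> 1 + z / p \<notin> \<real>\<^sub>\<le>\<^sub>0"
    and slit_q: "\<And>z. z \<in> D \<Longrightarrow> 1 + z / q \<notin> \<real>\<^sub>\<le>\<^sub>0"
    and near: "\<forall>\<^sub>F z in nhds 0. (r + z) * deriv h z + \<sigma> * h z
                  = q * c 1 * (1 + z / p) powr (- A - 1) + p * b 1 * (1 + z / q) powr (- B - 1)"
    and z: "z \<in> D"
  shows "(r + z) * deriv h z + \<sigma> * h z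
           = q * c 1 * (1 + z / p) powr (- A - 1) + p * b 1 * (1 + z / q) powr (- B - 1)"
proof -
  obtain U where U: "open U" "0 \<in> U"
    and eq: "\<And>z. z \<in> U \<Longrightarrow> (r + z) * deriv h z + \<sigma> * h z
              = q * c 1 * (1 + z / p) powr (- A - 1) + p * b 1 * (1 + z / q) powr (- B - 1)"
    using near unfolding eventually_nhds by blast
  show ?thesis
  proof (rule analytic_continuation_open[of "U \<inter> D" D, where
      f = "\<lambda>z. (r + z) * deriv h z + \<sigma> * h z" and
      g = "\<lambda>z. q * c 1 * (1 + z / p) powr (- A - 1) + p * b 1 * (1 + z / q) powr (- B - 1)"])
    show "(\<lambda>z. (r + z) * deriv h z + \<sigma> * h z) holomorphic_on D"
      using D(1) hol by (intro holomorphic_intros)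
    show "(\<lambda>z. q * c 1 * (1 + z / p) powr (- A - 1) + p * b 1 * (1 + z / q) powr (- B - 1)) holomorphic_on D"
      using slit_p slit_q by (intro holomorphic_intros) auto
  qed (use U D z eq in auto)
qed

lemma DERIV_pochhammer_term:
  fixes A p z :: complex and c :: "nat \<Rightarrow> complex"
  assumes p: "p \<noteq> 0" and slit: "1 + z / p \<notin> \<real>\<^sub>\<le>\<^sub>0"
    and c_Suc: "p * c (Suc m) = - (A + of_nat m) * c m"
  shows "((\<lambda>z. c m * (1 + z / p) powr (- A - of_nat m)) has_field_derivative
           c (Suc m) * (1 + z / p) powr (- A - of_nat (Suc m))) (at z)"
proof -
  have "((\<lambda>z. c m * (1 + z / p) powr (- A - of_nat m)) has_field_derivative
           c m * ((- A - of_nat m) / p * (1 + z / p) powr (- A - of_nat m - 1))) (at z)"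
    by (intro DERIV_cmult DERIV_one_plus_div_powr p slit)
  moreover have "c m * ((- A - of_nat m) / p * (1 + z / p) powr (- A - of_nat m - 1))
      = c (Suc m) * (1 + z / p) powr (- A - of_nat (Suc m))"
  proof -
    have "c m * ((- A - of_nat m) / p) = c (Suc m)" using c_Suc p by (simp add: field_simps)
    moreover have "- A - of_nat m - 1 = - A - of_nat (Suc m)" by simp
    ultimately show ?thesis by (metis mult.assoc)
  qed
  ultimately show ?thesis by (simp only:)
qed

lemma higher_deriv_borel_ode:
  fixes h :: "complex \<Rightarrow> complex" and A B p q r \<sigma> :: complex and b c :: "nat \<Rightarrow> complex"
  assumes D: "open D" and hol: "h holomorphic_on D" and p: "p \<noteq> 0" and q: "q \<noteq> 0"
    and slit_p: "\<And>z. z \<in> D \<Longrightarrow> 1 + z / p \<notin> \<real>\<^sub>\<le>\<^sub>0"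
    and slit_q: "\<And>z. z \<in> D \<Longrightarrow> 1 + z / q \<notin> \<real>\<^sub>\<le>\<^sub>0"
    and c_Suc: "\<And>k. p * c (Suc k) = - (A + of_nat k) * c k"
    and b_Suc: "\<And>k. q * b (Suc k) = - (B + of_nat k) * b k"
    and ode: "\<And>z. z \<in> D \<Longrightarrow> (r + z) * deriv h z + \<sigma> * h z
                 = q * c 1 * (1 + z / p) powr (- A - 1) + p * b 1 * (1 + z / q) powr (- B - 1)"
    and z: "z \<in> D"
  shows "(r + z) * (deriv ^^ Suc m) h z + (\<sigma> + of_nat m) * (deriv ^^ m) h z
          = q * (c (Suc m) * (1 + z / p) powr (- A - of_nat (Suc m)))
            + p * (b (Suc m) * (1 + z / q) powr (- B - of_nat (Suc m)))"
  using z
proof (induction m arbitrary: z)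
  case 0
  then show ?case using ode by (simp add: mult.assoc)
next
  case (Suc m)
  have higher_deriv: "((deriv ^^ k) h has_field_derivative (deriv ^^ Suc k) h z) (at z)" for k
    by (rule has_field_derivative_higher_deriv[OF hol D Suc.prems])
  have "((\<lambda>z. (r + z) * (deriv ^^ Suc m) h z + (\<sigma> + of_nat m) * (deriv ^^ m) h z) has_field_derivative
          (r + z) * (deriv ^^ Suc (Suc m)) h z + (\<sigma> + of_nat (Suc m)) * (deriv ^^ Suc m) h z) (at z)"
    by (rule derivative_eq_intros higher_deriv refl | simp add: algebra_simps)+
  then have "((\<lambda>z. q * (c (Suc m) * (1 + z / p) powr (- A - of_nat (Suc m)))
                  + p * (b (Suc m) * (1 + z / q) powr (- B - of_nat (Suc m)))) has_field_derivative
          (r + z) * (deriv ^^ Suc (Suc m)) h z + (\<sigma> + of_nat (Suc m)) * (deriv ^^ Suc m) h z) (at z)"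
    using D Suc.prems Suc.IH by (elim has_field_derivative_transform_within_open) auto
  moreover have "((\<lambda>z. q * (c (Suc m) * (1 + z / p) powr (- A - of_nat (Suc m)))
                  + p * (b (Suc m) * (1 + z / q) powr (- B - of_nat (Suc m)))) has_field_derivative
          q * (c (Suc (Suc m)) * (1 + z / p) powr (- A - of_nat (Suc (Suc m))))
          + p * (b (Suc (Suc m)) * (1 + z / q) powr (- B - of_nat (Suc (Suc m))))) (at z)"
    using Suc.prems
    by (intro DERIV_add DERIV_cmult DERIV_pochhammer_term p q slit_p slit_q c_Suc b_Suc)
  ultimately show ?case by (rule DERIV_unique)
qed

section \<open>The Laplace transform of the Borel transform\<close>

lemma borel_continuationE:
  assumes "borel_continuation f \<theta> h K"
  obtains S where "open S" "\<And>t. t \<ge> 0 \<Longrightarrow> of_real t * cis \<theta> \<in> S" "h holomorphic_on S"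
    "h has_fps_expansion Abs_fps (\<lambda>n. f n / fact n)"
proof -
  obtain S \<rho> where S: "open S" "0 < \<rho>" "\<And>t. t \<ge> 0 \<Longrightarrow> of_real t * cis \<theta> \<in> S" "h holomorphic_on S"
    and sums: "\<And>\<zeta>. \<zeta> \<in> ball 0 \<rho> \<Longrightarrow> (\<lambda>n. f n / fact n * \<zeta> ^ n) sums h \<zeta>"
    using assms unfolding borel_continuation_def by blast
  have "\<forall>\<^sub>F \<zeta> in nhds 0. \<zeta> \<in> ball 0 \<rho>"
    using S(2) by (intro eventually_nhds_in_open) auto
  then have "\<forall>\<^sub>F \<zeta> in nhds 0. (\<lambda>n. Abs_fps (\<lambda>n. f n / fact n) $ n * \<zeta> ^ n) sums h \<zeta>"
    by eventually_elim (use sums in simp)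
  then have "h has_fps_expansion Abs_fps (\<lambda>n. f n / fact n)"
    by (rule has_fps_expansionI)
  with S that show ?thesis by blast
qed

lemma continuous_on_powr_inverse_ray:
  fixes u v e :: complex
  assumes "u \<noteq> 0" "\<And>t. t \<ge> 0 \<Longrightarrow> of_real t * cis \<theta> \<noteq> - u"
    and "v \<noteq> 0" "\<And>t. t \<ge> 0 \<Longrightarrow> of_real t * cis \<theta> \<noteq> - v"
  shows "continuous_on {0..} (\<lambda>t::real. (1 + of_real t * cis \<theta> / u) powr e * inverse (1 + of_real t * cis \<theta> / v))"
  using assms by (intro continuous_on_mult continuous_on_powr_ray continuous_on_inverse_ray)

lemma exp_type_less_powr_inverse_ray:
  fixes u v e :: complex
  assumes "u \<noteq> 0" "\<And>t. t \<ge> 0 \<Longrightarrow> of_real t * cis \<theta> \<noteq> - u"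
    and "v \<noteq> 0" "\<And>t. t \<ge> 0 \<Longrightarrow> of_real t * cis \<theta> \<noteq> - v" and "c > 0"
  shows "exp_type_less (\<lambda>t. (1 + of_real t * cis \<theta> / u) powr e * inverse (1 + of_real t * cis \<theta> / v)) c"
proof -
  have "c / 2 > 0" using assms(5) by simp
  from exp_type_less_mult[OF exp_type_less_powr_ray[OF assms(1,2) this] exp_type_less_inverse_ray[OF assms(3,4) this]]
  show ?thesis by simp
qed

lemma borel_transform_ode:
  fixes A B p q :: complex and \<theta> K :: real and b c \<omega> :: "nat \<Rightarrow> complex" and h :: "complex \<Rightarrow> complex"
  assumes p: "p \<noteq> 0" and q: "q \<noteq> 0"
    and off_p: "\<And>t. t \<ge> 0 \<Longrightarrow> of_real t * cis \<theta> \<noteq> - p"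
    and off_q: "\<And>t. t \<ge> 0 \<Longrightarrow> of_real t * cis \<theta> \<noteq> - q"
    and b_def: "\<And>n. b n = (-1) ^ n * pochhammer B n / q ^ n"
    and c_def: "\<And>n. c n = (-1) ^ n * pochhammer A n / p ^ n"
    and \<omega>_def: "\<And>n. \<omega> n = (\<Sum>k\<le>n. c k * b (n - k))"
    and h: "borel_continuation \<omega> \<theta> h K"
  obtains D where "open D" "h holomorphic_on D" "\<And>t. t \<ge> 0 \<Longrightarrow> of_real t * cis \<theta> \<in> D"
    "\<And>z. z \<in> D \<Longrightarrow> 1 + z / p \<notin> \<real>\<^sub>\<le>\<^sub>0" "\<And>z. z \<in> D \<Longrightarrow> 1 + z / q \<notin> \<real>\<^sub>\<le>\<^sub>0"
    "\<And>z. z \<in> D \<Longrightarrow> (p + q + z) * deriv h z + (A + B) * h z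
       = q * c 1 * (1 + z / p) powr (- A - 1) + p * b 1 * (1 + z / q) powr (- B - 1)"
    "\<And>k. (deriv ^^ k) h 0 = \<omega> k"
proof -
  obtain S where S: "open S" "\<And>t. t \<ge> 0 \<Longrightarrow> of_real t * cis \<theta> \<in> S" "h holomorphic_on S"
    and fps: "h has_fps_expansion Abs_fps (\<lambda>n. \<omega> n / fact n)"
    using borel_continuationE[OF h] by blast
  obtain D where D: "open D" "connected D" "D \<subseteq> S" "\<And>t. t \<ge> 0 \<Longrightarrow> of_real t * cis \<theta> \<in> D"
    and slit: "\<And>z. z \<in> D \<Longrightarrow> 1 + z / p \<notin> \<real>\<^sub>\<le>\<^sub>0" "\<And>z. z \<in> D \<Longrightarrow> 1 + z / q \<notin> \<real>\<^sub>\<le>\<^sub>0"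
    using slit_domain_around_ray[OF S(1,2) p off_p q off_q] by blast
  have hol: "h holomorphic_on D" using S(3) D(3) by (rule holomorphic_on_subset)
  have "0 \<in> D" using D(4)[of 0] by simp
  have rec: "(p + q) * \<omega> (Suc n) + (A + B + of_nat n) * \<omega> n = q * c (Suc n) + p * b (Suc n)" for n
    by (rule cauchy_product_pochhammer_recurrence[OF p q b_def c_def \<omega>_def])
  note ode = borel_ode_on_domain[where b = b and c = c, OF D(1,2) \<open>0 \<in> D\<close> hol slit
      borel_ode_near_zero[OF p q fps c_def b_def rec]]
  have "(deriv ^^ k) h 0 = \<omega> k" for k
    using fps_nth_fps_expansion[OF fps, of k] by simp
  with D(1,4) hol slit ode that show ?thesis by (simp add: add.assoc)
qed

lemma terminal_higher_deriv:
  fixes h :: "complex \<Rightarrow> complex" and A B p q :: complex and b c :: "nat \<Rightarrow> complex"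
  assumes D: "open D" and hol: "h holomorphic_on D"
    and p: "p \<noteq> 0" and q: "q \<noteq> 0" and r: "p + q \<noteq> 0"
    and slit_p: "\<And>z. z \<in> D \<Longrightarrow> 1 + z / p \<notin> \<real>\<^sub>\<le>\<^sub>0"
    and slit_q: "\<And>z. z \<in> D \<Longrightarrow> 1 + z / q \<notin> \<real>\<^sub>\<le>\<^sub>0"
    and c_Suc: "\<And>k. p * c (Suc k) = - (A + of_nat k) * c k"
    and b_Suc: "\<And>k. q * b (Suc k) = - (B + of_nat k) * b k"
    and ode: "\<And>z. z \<in> D \<Longrightarrow> (p + q + z) * deriv h z + (A + B) * h z
                 = q * c 1 * (1 + z / p) powr (- A - 1) + p * b 1 * (1 + z / q) powr (- B - 1)"
    and M: "M \<ge> 1" "A + B + of_nat M = 1"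
    and z: "z \<in> D" "p + q + z \<noteq> 0"
  shows "(deriv ^^ M) h z =
           q * c M / (p + q) * ((1 + z / p) powr (- A - of_nat M) * inverse (1 + z / (p + q)))
         + p * b M / (p + q) * ((1 + z / q) powr (- B - of_nat M) * inverse (1 + z / (p + q)))"
proof -
  have "A + B + of_nat (M - 1) = (A + B + of_nat M) - 1" using M by (simp add: of_nat_diff algebra_simps)
  also have "\<dots> = 0" using M by simp
  finally have "A + B + of_nat (M - 1) = 0" .
  moreover have "Suc (M - 1) = M" using M by simp
  ultimately have "(p + q + z) * (deriv ^^ M) h z
      = q * (c M * (1 + z / p) powr (- A - of_nat M)) + p * (b M * (1 + z / q) powr (- B - of_nat M))"
    using higher_deriv_borel_ode[OF D hol p q slit_p slit_q c_Suc b_Suc ode z(1), of "M - 1"] by simp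
  then have deriv_eq: "(deriv ^^ M) h z = (q * (c M * (1 + z / p) powr (- A - of_nat M))
      + p * (b M * (1 + z / q) powr (- B - of_nat M))) / (p + q + z)"
    using z(2) by (simp add: eq_divide_eq mult.commute)
  have inverse_eq: "inverse (1 + z / (p + q)) = (p + q) / (p + q + z)"
    using r z(2) by (simp add: field_simps)
  have cancel: "k / (p + q) * (X * ((p + q) / (p + q + z))) = k * X / (p + q + z)" for k X
    using r by simp
  show ?thesis unfolding deriv_eq inverse_eq by (simp only: cancel mult.assoc add_divide_distrib[symmetric])
qed

theorem ray_laplace_borel_pochhammer_product:
  fixes A B p q :: complex and M :: nat and \<theta> K :: real
    and b c \<omega> :: "nat \<Rightarrow> complex" and h :: "complex \<Rightarrow> complex" and x :: complex
  assumes p: "p \<noteq> 0" and q: "q \<noteq> 0"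
    and off_p: "\<And>t. t \<ge> 0 \<Longrightarrow> of_real t * cis \<theta> \<noteq> - p"
    and off_q: "\<And>t. t \<ge> 0 \<Longrightarrow> of_real t * cis \<theta> \<noteq> - q"
    and off_r: "\<And>t. t \<ge> 0 \<Longrightarrow> of_real t * cis \<theta> \<noteq> - (p + q)"
    and M: "M \<ge> 1" "A + B + of_nat M = 1"
    and b_def: "\<And>n. b n = (-1) ^ n * pochhammer B n / q ^ n"
    and c_def: "\<And>n. c n = (-1) ^ n * pochhammer A n / p ^ n"
    and \<omega>_def: "\<And>n. \<omega> n = (\<Sum>k\<le>n. c k * b (n - k))"
    and h: "borel_continuation \<omega> \<theta> h K"
    and x: "x \<noteq> 0" "Re (cis \<theta> / x) > 0"
  shows "(p + q) * ray_laplace \<theta> h x =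
      (\<Sum>l=0..M-1. (p * b l + q * c l) * x ^ l *
          (\<Sum>s=0..M-1-l. (-1) ^ s * pochhammer (A + B + of_nat l) s / (p + q) ^ s * x ^ s))
     + x ^ M * (b M * p * ray_laplace \<theta> (\<lambda>\<xi>. (1 + \<xi> / q) powr (- B - of_nat M) * inverse (1 + \<xi> / (p + q))) x
              + c M * q * ray_laplace \<theta> (\<lambda>\<xi>. (1 + \<xi> / p) powr (- A - of_nat M) * inverse (1 + \<xi> / (p + q))) x)"
proof -
  define r where "r = p + q"
  define G1 where "G1 = (\<lambda>\<xi>. (1 + \<xi> / q) powr (- B - of_nat M) * inverse (1 + \<xi> / r))"
  define G2 where "G2 = (\<lambda>\<xi>. (1 + \<xi> / p) powr (- A - of_nat M) * inverse (1 + \<xi> / r))"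
  have r: "r \<noteq> 0" using off_r[of 0] by (simp add: r_def add_eq_0_iff)
  obtain D where D: "open D" "h holomorphic_on D" "\<And>t. t \<ge> 0 \<Longrightarrow> of_real t * cis \<theta> \<in> D"
    and slit: "\<And>z. z \<in> D \<Longrightarrow> 1 + z / p \<notin> \<real>\<^sub>\<le>\<^sub>0" "\<And>z. z \<in> D \<Longrightarrow> 1 + z / q \<notin> \<real>\<^sub>\<le>\<^sub>0"
    and ode: "\<And>z. z \<in> D \<Longrightarrow> (p + q + z) * deriv h z + (A + B) * h z
       = q * c 1 * (1 + z / p) powr (- A - 1) + p * b 1 * (1 + z / q) powr (- B - 1)"
    and at_0: "\<And>k. (deriv ^^ k) h 0 = \<omega> k"
    using borel_transform_ode[OF p q off_p off_q b_def c_def \<omega>_def h] by blast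
  have deriv_M: "(deriv ^^ M) h (of_real t * cis \<theta>) =
      q * c M / r * G2 (of_real t * cis \<theta>) + p * b M / r * G1 (of_real t * cis \<theta>)" if "t \<ge> 0" for t
    using terminal_higher_deriv[OF D(1,2) p q r[unfolded r_def] slit pochhammer_coeff_Suc[OF p c_def]
        pochhammer_coeff_Suc[OF q b_def] ode M D(3)[OF that]] off_r[OF that]
    by (simp add: G1_def G2_def r_def add.commute add_eq_0_iff)
  have G1: "continuous_on {0..} (\<lambda>t. G1 (of_real t * cis \<theta>))"
           "exp_type_less (\<lambda>t. G1 (of_real t * cis \<theta>)) (Re (cis \<theta> / x))"
    unfolding G1_def r_def
    using continuous_on_powr_inverse_ray[OF q off_q r[unfolded r_def] off_r]
          exp_type_less_powr_inverse_ray[OF q off_q r[unfolded r_def] off_r x(2)] by simp_all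
  have G2: "continuous_on {0..} (\<lambda>t. G2 (of_real t * cis \<theta>))"
           "exp_type_less (\<lambda>t. G2 (of_real t * cis \<theta>)) (Re (cis \<theta> / x))"
    unfolding G2_def r_def
    using continuous_on_powr_inverse_ray[OF p off_p r[unfolded r_def] off_r]
          exp_type_less_powr_inverse_ray[OF p off_p r[unfolded r_def] off_r x(2)] by simp_all
  have "exp_type_less (\<lambda>t. (deriv ^^ M) h (of_real t * cis \<theta>)) (Re (cis \<theta> / x))"
    using exp_type_less_add[OF exp_type_less_cmult[OF G2(2), of "q * c M / r"]
        exp_type_less_cmult[OF G1(2), of "p * b M / r"]]
    by (rule exp_type_less_cong) (simp add: deriv_M)
  then have taylor: "ray_laplace \<theta> h x = (\<Sum>k<M. \<omega> k * x ^ k) + x ^ M * ray_laplace \<theta> ((deriv ^^ M) h) x"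
    using ray_laplace_taylor[OF D x] by (simp add: at_0)
  have "ray_laplace \<theta> ((deriv ^^ M) h) x
      = ray_laplace \<theta> (\<lambda>\<xi>. q * c M / r * G2 \<xi> + p * b M / r * G1 \<xi>) x"
    by (rule ray_laplace_cong) (rule deriv_M)
  also have "\<dots> = q * c M / r * ray_laplace \<theta> G2 x + p * b M / r * ray_laplace \<theta> G1 x"
    by (rule ray_laplace_lincomb[OF G2 G1])
  finally have RL_M: "r * ray_laplace \<theta> ((deriv ^^ M) h) x = b M * p * ray_laplace \<theta> G1 x + c M * q * ray_laplace \<theta> G2 x"
    using r by (simp add: field_simps)
  have "r * ray_laplace \<theta> h x = r * (\<Sum>k<M. \<omega> k * x ^ k) + x ^ M * (r * ray_laplace \<theta> ((deriv ^^ M) h) x)"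
    unfolding taylor by (simp add: algebra_simps)
  also have "\<dots> = (\<Sum>l=0..M-1. (p * b l + q * c l) * x ^ l *
          (\<Sum>s=0..M-1-l. (-1) ^ s * pochhammer (A + B + of_nat l) s / r ^ s * x ^ s))
      + x ^ M * (b M * p * ray_laplace \<theta> G1 x + c M * q * ray_laplace \<theta> G2 x)"
    unfolding RL_M using cauchy_product_partial_sum[OF p q r[unfolded r_def] b_def c_def \<omega>_def M(1), of x]
    by (simp only: r_def)
  finally show ?thesis unfolding r_def G1_def G2_def .
qed

theorem mainTheorem11:
  fixes \<alpha>1 \<alpha>2 \<alpha>3 \<beta>1 \<beta>2 \<beta>3 :: complex
    and N :: nat and \<theta> K :: real
    and b c \<omega> :: "nat \<Rightarrow> complex" and h :: "complex \<Rightarrow> complex" and x :: complex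
  assumes dist: "\<beta>1 \<noteq> \<beta>2" "\<beta>1 \<noteq> \<beta>3" "\<beta>2 \<noteq> \<beta>3"
    and near: "norm (\<beta>3 - \<beta>1) < norm (\<beta>3 - \<beta>2)" "norm (\<beta>3 - \<beta>1) < norm (\<beta>2 - \<beta>1)"
    and N: "\<alpha>1 - \<alpha>3 = of_nat N" "N \<ge> 4"
    and a21: "\<not> (\<exists>k::nat. k \<ge> 2 \<and> \<alpha>2 - \<alpha>1 = - of_nat k)"
    and a32: "\<not> (\<exists>k::nat. k \<ge> 2 \<and> \<alpha>3 - \<alpha>2 = - of_nat k)"
    and b_def: "\<And>n. b n = (-1) ^ n * pochhammer (2 + \<alpha>3 - \<alpha>2) n / (\<beta>3 - \<beta>2) ^ n"
    and c_def: "\<And>n. c n = (-1) ^ n * pochhammer (2 + \<alpha>2 - \<alpha>1) n / (\<beta>2 - \<beta>1) ^ n"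
    and \<omega>_def: "\<And>n. \<omega> n = (\<Sum>k\<le>n. c k * b (n - k))"
    and dir: "\<And>k::int. \<theta> \<noteq> Arg (\<beta>1 - \<beta>2) + 2 * pi * of_int k"
             "\<And>k::int. \<theta> \<noteq> Arg (\<beta>1 - \<beta>3) + 2 * pi * of_int k"
             "\<And>k::int. \<theta> \<noteq> Arg (\<beta>2 - \<beta>3) + 2 * pi * of_int k"
    and h: "borel_continuation \<omega> \<theta> h K"
    and x: "x \<noteq> 0" "Re (cis \<theta> / x) > K" "Re (cis \<theta> / x) > 0"
  shows "(\<beta>3 - \<beta>1) * ray_laplace \<theta> h x =
      (\<Sum>l=0..N-4. ((\<beta>2 - \<beta>1) * b l + (\<beta>3 - \<beta>2) * c l) * x ^ l *
          (\<Sum>s=0..N-4-l. (-1) ^ s * pochhammer (4 + of_nat l + \<alpha>3 - \<alpha>1) s / (\<beta>3 - \<beta>1) ^ s * x ^ s))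
     + x ^ (N - 3) *
       (b (N - 3) * (\<beta>2 - \<beta>1) *
          ray_laplace \<theta> (\<lambda>\<xi>. (1 + \<xi> / (\<beta>3 - \<beta>2)) powr (1 + \<alpha>2 - \<alpha>1) * inverse (1 + \<xi> / (\<beta>3 - \<beta>1))) x
        + c (N - 3) * (\<beta>3 - \<beta>2) *
          ray_laplace \<theta> (\<lambda>\<xi>. (1 + \<xi> / (\<beta>2 - \<beta>1)) powr (1 + \<alpha>3 - \<alpha>2) * inverse (1 + \<xi> / (\<beta>3 - \<beta>1))) x)"
proof -
  have off: "\<And>t. t \<ge> 0 \<Longrightarrow> of_real t * cis \<theta> \<noteq> - (\<beta>2 - \<beta>1)"
            "\<And>t. t \<ge> 0 \<Longrightarrow> of_real t * cis \<theta> \<noteq> - (\<beta>3 - \<beta>2)"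
            "\<And>t. t \<ge> 0 \<Longrightarrow> of_real t * cis \<theta> \<noteq> - (\<beta>2 - \<beta>1 + (\<beta>3 - \<beta>2))"
    using not_on_ray_if_Arg_neq[OF _ dir(1)] not_on_ray_if_Arg_neq[OF _ dir(3)]
      not_on_ray_if_Arg_neq[OF _ dir(2)] dist by auto
  have "of_nat (N - 3) = \<alpha>1 - \<alpha>3 - 3" using N by (simp add: of_nat_diff)
  then have M: "1 \<le> N - 3" "(2 + \<alpha>2 - \<alpha>1) + (2 + \<alpha>3 - \<alpha>2) + of_nat (N - 3) = 1"
      "- (2 + \<alpha>3 - \<alpha>2) - of_nat (N - 3) = 1 + \<alpha>2 - \<alpha>1"
      "- (2 + \<alpha>2 - \<alpha>1) - of_nat (N - 3) = 1 + \<alpha>3 - \<alpha>2"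
    using N(2) by (simp_all add: algebra_simps)
  have pq: "\<beta>2 - \<beta>1 \<noteq> 0" "\<beta>3 - \<beta>2 \<noteq> 0" using dist by auto
  have "\<beta>2 - \<beta>1 + (\<beta>3 - \<beta>2) = \<beta>3 - \<beta>1" "N - 3 - 1 = N - 4"
    "\<And>l. 2 + \<alpha>2 - \<alpha>1 + (2 + \<alpha>3 - \<alpha>2) + of_nat l = 4 + of_nat l + \<alpha>3 - \<alpha>1"
    by (simp_all add: algebra_simps)
  with ray_laplace_borel_pochhammer_product[OF pq off M(1,2) b_def c_def \<omega>_def h x(1,3)]
  show ?thesis unfolding M(3,4) by (simp only:)
qed

end
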